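(* Fix $C>0$ and $Q\in\mathbb{N}$. Let $L\in\{\mathrm{OR},\mathrm{SUM},\mathrm{OR2},\mathrm{SUM2}\}$ and let $\{\mathcal{L}_n\}$ be a family in which each $\mathcal{L}_n$ is a strip pattern set of width $C$ and density $Q$ on the $n\times n$ image $I_n$, such that $|\mathcal{L}_n|=\Theta(n^2)$ and $V(\mathcal{L}_n)=\Omega(n^3)$. Then $L(\mathcal{L}_n)=\Omega(n^2\log n)$.
   Context: Image: the $n\times n$ image $I_n$ is the set of $n^2$ pixel variables $p_{ij}$, $i,j=0,\dots,n-1$; pixel $p_{ij}$ is identified with the integer point $(i,j)\in\mathbb{R}^2$. A pattern is a nonempty subset of the image; a pattern set $\mathcal{T}=\{T_k\}_{k=1}^m$ is a nonempty set of $m$ distinct patterns, and its volume is $V(\mathcal{T})=\sum_{T\in\mathcal{T}}|T|$. Computing $\mathcal{T}$ means computing simultaneously $y_k=\sum_{p\in T_k}p$, $k=1,\dots,m$, where "sum" is a commutative semigroup operation on pixel values. Circuits: a circuit is a directed acyclic graph with one input node of fanin zero per pixel and $m$ output nodes $y_k$ of fanout zero; every node of nonzero fanin (a gate) may have any positive number of incoming edges and computes the semigroup sum of its in-neighbours' values. The size of a circuit is its number of edges. A circuit computes $\mathcal{T}$ if for every input assignment each $y_k$ equals $\sum_{p\in T_k}p$. $\mathrm{OR}(\mathcal{T})$ (resp. $\mathrm{SUM}(\mathcal{T})$) is the minimal size of a circuit computing $\mathcal{T}$ over $(\{0,1\},\vee)$ (resp. $(\mathbb{N},+)$). $\mathrm{OR2}(\mathcal{T})$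 (resp. $\mathrm{SUM2}(\mathcal{T})$) is the minimal number of gates of a circuit computing $\mathcal{T}$ over $(\{0,1\},\vee)$ (resp. $(\mathbb{N},+)$) in which all nodes have fanin at most $2$. Strips: for a line $l\subset\mathbb{R}^2$ and $C>0$, $s(l,C)=\{r\in\mathbb{R}^2\mid \rho(r,l)\leqslant C/2\}$ ($\rho$ Euclidean distance). A line is mostly horizontal inclined to the right if it has equation $y=ax+b$ with $0\leqslant a\leqslant1$; such a line is integer at an image of width $w$ if $a=\frac{e}{w-1}$ for some $e\in\{0,1,\dots,w-1\}$ (here $w=n$). Patterns $T\in\mathcal{M}$ are $C$-parallel if there is a family of integer lines $\{l(T)\mid T\in\mathcal{M}\}$, all with the same slope, such that $T\subset s(l(T),C)$ for all $T\in\mathcal{M}$. A pattern set $\mathcal{L}$ is a strip pattern set of width $C>0$ and density $Q\in\mathbb{N}$ if (1) for every $L\in\mathcal{L}$ there is an integer line $l$ with $L\subset s(l,C)$, and (2) every $C$-parallel subset $\mathcal{M}\subseteq\mathcal{L}$ with $\bigcap_{L\in\mathcal{M}}L\neq\varnothing$ satisfies $|\mathcal{M}|\leqslant Q$. *)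

theory Defs
  imports "HOL-Analysis.Analysis" "HOL-Library.Landau_Symbols"
begin

text \<open>Pixels p_ij are identified with pairs (i,j); nodes of a circuit are either
  input nodes (one per pixel) or gates (identified by natural numbers).\<close>

type_synonym pixel = "nat \<times> nat"
type_synonym node = "pixel + nat"

definition img :: "nat \<Rightarrow> pixel set" where
  "img n = {0..<n} \<times> {0..<n}"

definition pattern_set :: "nat \<Rightarrow> pixel set set \<Rightarrow> bool" where
  "pattern_set n \<T> \<longleftrightarrow> \<T> \<noteq> {} \<and> (\<forall>T\<in>\<T>. T \<noteq> {} \<and> T \<subseteq> img n)"

definition volume :: "pixel set set \<Rightarrow> nat" where
  "volume \<T> = (\<Sum>T\<in>\<T>. card T)"

text \<open>A circuit on the image I_n computing (the outputs for) the pattern set: a finite set G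
  of gates, the in-neighbour set of every gate (nonempty), acyclicity (witnessed by a rank
  function), and an injective assignment of an output node of fanout zero to each pattern.\<close>

definition circuit ::
  "nat \<Rightarrow> pixel set set \<Rightarrow> nat set \<Rightarrow> (nat \<Rightarrow> node set) \<Rightarrow> (pixel set \<Rightarrow> node) \<Rightarrow> bool" where
  "circuit n \<T> G inn out \<longleftrightarrow>
     finite G \<and>
     (\<forall>g\<in>G. inn g \<noteq> {} \<and> inn g \<subseteq> Inl ` img n \<union> Inr ` G) \<and>
     (\<exists>r :: nat \<Rightarrow> nat. \<forall>g\<in>G. \<forall>h. Inr h \<in> inn g \<longrightarrow> r h < r g) \<and>
     inj_on out \<T> \<and>
     out ` \<T> \<subseteq> Inl ` img n \<union> Inr ` G \<and>
     (\<forall>T\<in>\<T>. \<forall>g\<in>G. out T \<notin> inn g)"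

definition circuit_size :: "nat set \<Rightarrow> (nat \<Rightarrow> node set) \<Rightarrow> nat" where
  "circuit_size G inn = (\<Sum>g\<in>G. card (inn g))"

definition computes_or ::
  "nat \<Rightarrow> pixel set set \<Rightarrow> nat set \<Rightarrow> (nat \<Rightarrow> node set) \<Rightarrow> (pixel set \<Rightarrow> node) \<Rightarrow> bool" where
  "computes_or n \<T> G inn out \<longleftrightarrow>
     (\<forall>(x :: pixel \<Rightarrow> bool) (v :: node \<Rightarrow> bool).
        (\<forall>p\<in>img n. v (Inl p) = x p) \<and> (\<forall>g\<in>G. v (Inr g) = (\<exists>u\<in>inn g. v u))
        \<longrightarrow> (\<forall>T\<in>\<T>. v (out T) = (\<exists>p\<in>T. x p)))"

definition computes_sum ::
  "nat \<Rightarrow> pixel set set \<Rightarrow> nat set \<Rightarrow> (nat \<Rightarrow> node set) \<Rightarrow> (pixel set \<Rightarrow> node) \<Rightarrow> bool" where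
  "computes_sum n \<T> G inn out \<longleftrightarrow>
     (\<forall>(x :: pixel \<Rightarrow> nat) (v :: node \<Rightarrow> nat).
        (\<forall>p\<in>img n. v (Inl p) = x p) \<and> (\<forall>g\<in>G. v (Inr g) = (\<Sum>u\<in>inn g. v u))
        \<longrightarrow> (\<forall>T\<in>\<T>. v (out T) = (\<Sum>p\<in>T. x p)))"

definition OR_cost :: "nat \<Rightarrow> pixel set set \<Rightarrow> nat" where
  "OR_cost n \<T> = (LEAST s. \<exists>G inn out. circuit n \<T> G inn out \<and> computes_or n \<T> G inn out
                              \<and> circuit_size G inn = s)"

definition SUM_cost :: "nat \<Rightarrow> pixel set set \<Rightarrow> nat" where
  "SUM_cost n \<T> = (LEAST s. \<exists>G inn out. circuit n \<T> G inn out \<and> computes_sum n \<T> G inn out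
                              \<and> circuit_size G inn = s)"

definition OR2_cost :: "nat \<Rightarrow> pixel set set \<Rightarrow> nat" where
  "OR2_cost n \<T> = (LEAST s. \<exists>G inn out. circuit n \<T> G inn out \<and> (\<forall>g\<in>G. card (inn g) \<le> 2)
                              \<and> computes_or n \<T> G inn out \<and> card G = s)"

definition SUM2_cost :: "nat \<Rightarrow> pixel set set \<Rightarrow> nat" where
  "SUM2_cost n \<T> = (LEAST s. \<exists>G inn out. circuit n \<T> G inn out \<and> (\<forall>g\<in>G. card (inn g) \<le> 2)
                              \<and> computes_sum n \<T> G inn out \<and> card G = s)"

text \<open>Strips and integer lines (mostly horizontal, inclined to the right, width w = n).\<close>

definition line :: "real \<Rightarrow> real \<Rightarrow> (real \<times> real) set" where
  "line a b = {(x, y). y = a * x + b}"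

definition integer_slope :: "nat \<Rightarrow> real \<Rightarrow> bool" where
  "integer_slope n a \<longleftrightarrow> (\<exists>e\<in>{0..<n}. a = real e / real (n - 1))"

definition strip :: "(real \<times> real) set \<Rightarrow> real \<Rightarrow> (real \<times> real) set" where
  "strip l C = {r. infdist r l \<le> C / 2}"

definition pix_pt :: "pixel \<Rightarrow> real \<times> real" where
  "pix_pt p = (real (fst p), real (snd p))"

definition in_strip :: "pixel set \<Rightarrow> (real \<times> real) set \<Rightarrow> real \<Rightarrow> bool" where
  "in_strip T l C \<longleftrightarrow> pix_pt ` T \<subseteq> strip l C"

definition C_parallel :: "nat \<Rightarrow> real \<Rightarrow> pixel set set \<Rightarrow> bool" where
  "C_parallel n C \<M> \<longleftrightarrow>
     (\<exists>a. integer_slope n a \<and> (\<exists>b :: pixel set \<Rightarrow> real. \<forall>T\<in>\<M>. in_strip T (line a (b T)) C))"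

definition strip_pattern_set :: "nat \<Rightarrow> real \<Rightarrow> nat \<Rightarrow> pixel set set \<Rightarrow> bool" where
  "strip_pattern_set n C Q \<L> \<longleftrightarrow>
     pattern_set n \<L> \<and>
     (\<forall>L\<in>\<L>. \<exists>a b. integer_slope n a \<and> in_strip L (line a b) C) \<and>
     (\<forall>\<M>\<subseteq>\<L>. C_parallel n C \<M> \<and> \<Inter>\<M> \<noteq> {} \<longrightarrow> card \<M> \<le> Q)"

end

theory Submission
  imports Defs "HOL-Library.Nat_Bijection"
begin

(* Over both (bool, or) and (nat, +) a circuit computes a pattern T exactly when the pixels
   from which the output of T is reachable are the pixels of T.  Give every wire (u, w) the
   weight |P w| / |P u|, where P u is the set of pixels below u.  Since ln b - ln a <= b / a,
   the weights along any path from a pixel of T to the output of T add up to at least ln |T|;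
   summing over the pixels of T and over all patterns, a wire (u, w) is charged at most |P w|
   times the number of patterns containing P w.  For a strip pattern set this product is O(n):
   the patterns containing a set S of horizontal width D have only O(n / D) possible slopes and
   at most Q patterns per slope, while |S| = O(D).  Hence the sum of |T| ln |T| over all
   patterns is at most O(n) times the circuit size, whereas it is at least V ln n - |L| n,
   which is of order n^3 log n.  Fan-in 2 circuits have at most twice as many wires as gates. *)

lemma finite_img: "finite (img n)"
  unfolding img_def by simp

lemma pattern_setD:
  assumes "pattern_set n L" "T \<in> L"
  shows "T \<subseteq> img n" "T \<noteq> {}" "finite T"
  using assms finite_subset[OF _ finite_img] unfolding pattern_set_def by blast+

lemma pattern_set_finite: "pattern_set n L \<Longrightarrow> finite L"
  using finite_Pow_iff[THEN iffD2, OF finite_img] unfolding pattern_set_def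
  by (rule rev_finite_subset) auto

section \<open>Strips and bands\<close>

definition band :: "real \<Rightarrow> real \<Rightarrow> real \<Rightarrow> pixel set" where
  "band a b C = {(x, y). \<bar>real y - a * real x - b\<bar> \<le> C}"

lemma strip_subset_band:
  assumes "in_strip T (line a b) C" "0 \<le> a" "a \<le> 1"
  shows "T \<subseteq> band a b C"
proof
  fix p assume "p \<in> T"
  then obtain x y where p: "p = (x, y)" and in_strip: "infdist (real x, real y) (line a b) \<le> C / 2"
    using assms(1) unfolding in_strip_def strip_def pix_pt_def by (cases p) auto
  have line_ne: "line a b \<noteq> {}" unfolding line_def by auto
  have "\<bar>real y - a * real x - b\<bar> \<le> 2 * dist (real x, real y) z"
    if z_line: "z \<in> line a b" for z
  proof -
    obtain zx where z: "z = (zx, a * zx + b)" using z_line unfolding line_def by auto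
    have "\<bar>real x - zx\<bar> \<le> dist (real x, real y) z" "\<bar>real y - (a * zx + b)\<bar> \<le> dist (real x, real y) z"
      using dist_fst_le[of "(real x, real y)" z] dist_snd_le[of "(real x, real y)" z] z
      by (simp_all add: dist_real_def)
    moreover have "real y - a * real x - b = (real y - (a * zx + b)) - a * (real x - zx)"
      by (simp add: algebra_simps)
    hence "\<bar>real y - a * real x - b\<bar> \<le> \<bar>real y - (a * zx + b)\<bar> + a * \<bar>real x - zx\<bar>"
      using assms(2) abs_triangle_ineq4[of "real y - (a * zx + b)" "a * (real x - zx)"]
      by (simp add: abs_mult)
    moreover have "a * \<bar>real x - zx\<bar> \<le> \<bar>real x - zx\<bar>"
      using assms(3) mult_right_mono[of a 1 "\<bar>real x - zx\<bar>"] by simp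
    ultimately show ?thesis by linarith
  qed
  hence "\<bar>real y - a * real x - b\<bar> / 2 \<le> infdist (real x, real y) (line a b)"
    unfolding infdist_notempty[OF line_ne] by (intro cINF_greatest[OF line_ne]) (simp add: mult.commute)
  with in_strip show "p \<in> band a b C" unfolding p band_def by simp
qed

lemma slope_le_1: "e < n \<Longrightarrow> real e / real (n - 1) \<le> 1"
  by (cases "e = 0") (simp_all add: divide_le_eq_1 of_nat_diff)

lemma card_le_Max_minus_Min:
  fixes X :: "nat set"
  assumes "finite X" "X \<noteq> {}"
  shows "real (card X) \<le> real (Max X) - real (Min X) + 1"
proof -
  have "card X \<le> card {Min X..Max X}" using assms by (intro card_mono) auto
  moreover have "Min X \<le> Max X" using assms by simp
  ultimately show ?thesis by (simp add: of_nat_diff)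
qed

lemma card_mult_le_of_spread:
  fixes A :: "nat set"
  assumes "finite A" "A \<noteq> {}" "0 \<le> D" "\<And>e e'. e \<in> A \<Longrightarrow> e' \<in> A \<Longrightarrow> (real e - real e') * D \<le> w"
  shows "real (card A) * D \<le> w + D"
proof -
  have "real (card A) * D \<le> (real (Max A) - real (Min A) + 1) * D"
    using card_le_Max_minus_Min[OF assms(1,2)] assms(3) by (rule mult_right_mono)
  also have "\<dots> = (real (Max A) - real (Min A)) * D + D" by (simp add: algebra_simps)
  also have "\<dots> \<le> w + D" using assms(4)[OF Max_in Min_in] assms(1,2) by simp
  finally show ?thesis .
qed

lemma finite_column: "finite S \<Longrightarrow> finite {y. (x, y) \<in> S}"
  using finite_vimageI[of S "Pair x"] by (simp add: inj_on_def vimage_def)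

lemma card_le_columns_times_band_height:
  assumes "finite S" "S \<subseteq> band a b C" "0 \<le> C"
  shows "real (card S) \<le> real (card (fst ` S)) * (2 * C + 1)"
proof -
  have column: "real (card {y. (x, y) \<in> S}) \<le> 2 * C + 1" for x
  proof (cases "{y. (x, y) \<in> S} = {}")
    case False
    define Y where "Y = {y. (x, y) \<in> S}"
    have "finite Y" unfolding Y_def using assms(1) by (rule finite_column)
    moreover have "Max Y \<in> Y" "Min Y \<in> Y" using \<open>finite Y\<close> False unfolding Y_def[symmetric] by auto
    ultimately have "\<bar>real (Max Y) - a * real x - b\<bar> \<le> C" "\<bar>real (Min Y) - a * real x - b\<bar> \<le> C"
      using assms(2) unfolding Y_def band_def by auto
    with card_le_Max_minus_Min[OF \<open>finite Y\<close> False[folded Y_def]] show ?thesis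
      unfolding Y_def by linarith
  qed (use assms(3) in simp)
  have "S = (SIGMA x:fst ` S. {y. (x, y) \<in> S})" by force
  hence "card S = card (SIGMA x:fst ` S. {y. (x, y) \<in> S})" by (rule arg_cong)
  also have "\<dots> = (\<Sum>x\<in>fst ` S. card {y. (x, y) \<in> S})"
    using assms(1) by (intro card_SigmaI) (auto intro: finite_column)
  finally have "real (card S) = (\<Sum>x\<in>fst ` S. real (card {y. (x, y) \<in> S}))" by simp
  also have "\<dots> \<le> (\<Sum>x\<in>fst ` S. 2 * C + 1)" by (intro sum_mono column)
  finally show ?thesis by simp
qed

lemma band_slope_gap:
  assumes "(x1, y1) \<in> band a b C \<inter> band a' b' C" "(x2, y2) \<in> band a b C \<inter> band a' b' C"
  shows "(a - a') * (real x2 - real x1) \<le> 4 * C"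
proof -
  have "(a - a') * (real x2 - real x1)
      = (real y2 - a' * real x2 - b') - (real y1 - a' * real x1 - b')
        - (real y2 - a * real x2 - b) + (real y1 - a * real x1 - b)"
    by (simp add: algebra_simps)
  moreover have "\<bar>real y1 - a * real x1 - b\<bar> \<le> C" "\<bar>real y2 - a * real x2 - b\<bar> \<le> C"
    "\<bar>real y1 - a' * real x1 - b'\<bar> \<le> C" "\<bar>real y2 - a' * real x2 - b'\<bar> \<le> C"
    using assms unfolding band_def by auto
  ultimately show ?thesis by linarith
qed

lemma slope_index_gap:
  assumes "S \<subseteq> band (real e / real (n - 1)) b C" "S \<subseteq> band (real e' / real (n - 1)) b' C"
    and "(x1, y1) \<in> S" "(x2, y2) \<in> S" "2 \<le> n"
  shows "(real e - real e') * (real x2 - real x1) \<le> 4 * C * real (n - 1)"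
proof -
  have "(real e / real (n - 1) - real e' / real (n - 1)) * (real x2 - real x1) \<le> 4 * C"
    using assms(1-4) by (intro band_slope_gap) blast+
  hence "(real e - real e') * (real x2 - real x1) / real (n - 1) \<le> 4 * C"
    by (simp only: diff_divide_distrib[symmetric] times_divide_eq_left)
  moreover have "real (n - 1) > 0" using assms(5) by simp
  ultimately show ?thesis by (simp only: pos_divide_le_eq)
qed

lemma card_slopes_mult_card_le:
  fixes A :: "nat set" and S :: "pixel set"
  assumes "2 \<le> n" "0 \<le> C" "finite S" "S \<noteq> {}" "fst ` S \<subseteq> {..<n}" "A \<subseteq> {..<n}" "A \<noteq> {}"
    and bands: "\<forall>e\<in>A. \<exists>b. S \<subseteq> band (real e / real (n - 1)) b C"
  shows "real (card A) * real (card S) \<le> 2 * (2 * C + 1)^2 * real n"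
proof -
  define X where "X = fst ` S"
  have X: "finite X" "X \<noteq> {}" unfolding X_def using assms(3,4) by auto
  define D where "D = real (Max X) - real (Min X)"
  obtain y1 y2 where lo: "(Min X, y1) \<in> S" and hi: "(Max X, y2) \<in> S"
    using Min_in[OF X] Max_in[OF X] unfolding X_def by auto
  have "Max X < n" using Max_in[OF X] assms(5) unfolding X_def by auto
  hence "real (Suc (Max X)) \<le> real n" by (intro of_nat_mono) simp
  moreover have "Min X \<le> Max X" using X by simp
  ultimately have D: "0 \<le> D" "D + 1 \<le> real n" unfolding D_def by auto
  obtain e0 b0 where "e0 \<in> A" "S \<subseteq> band (real e0 / real (n - 1)) b0 C"
    using assms(7) bands by blast
  hence "real (card S) \<le> real (card X) * (2 * C + 1)"
    unfolding X_def using assms(2,3) by (intro card_le_columns_times_band_height)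
  also have "\<dots> \<le> (D + 1) * (2 * C + 1)"
    using card_le_Max_minus_Min[OF X] assms(2) unfolding D_def by (intro mult_right_mono) auto
  finally have card_S: "real (card S) \<le> (D + 1) * (2 * C + 1)" .
  have gap: "(real e - real e') * D \<le> 4 * C * real (n - 1)"
    if e: "e \<in> A" and e': "e' \<in> A" for e e'
  proof -
    obtain b b' where "S \<subseteq> band (real e / real (n - 1)) b C" "S \<subseteq> band (real e' / real (n - 1)) b' C"
      using bands e e' by blast
    from this lo hi assms(1) show ?thesis unfolding D_def by (rule slope_index_gap)
  qed
  have "finite A" using assms(6) finite_subset by blast
  hence card_A_D: "real (card A) * D \<le> 4 * C * real (n - 1) + D"
    using assms(7) D(1) gap by (rule card_mult_le_of_spread)
  have card_A: "real (card A) \<le> real n" using card_mono[OF _ assms(6)] by simp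
  have "real (card A) * real (card S) \<le> real (card A) * ((D + 1) * (2 * C + 1))"
    using card_S by (intro mult_left_mono) auto
  also have "\<dots> = (real (card A) * D + real (card A)) * (2 * C + 1)" by (simp add: algebra_simps)
  also have "\<dots> \<le> (4 * C * real n + 2 * real n) * (2 * C + 1)"
  proof (rule mult_right_mono)
    have "4 * C * real (n - 1) \<le> 4 * C * real n" using assms(2) by (intro mult_left_mono) auto
    thus "real (card A) * D + real (card A) \<le> 4 * C * real n + 2 * real n"
      using card_A_D card_A D by linarith
  qed (use assms(2) in simp)
  also have "\<dots> = 2 * (2 * C + 1)^2 * real n" by (simp add: power2_eq_square algebra_simps)
  finally show ?thesis .
qed

section \<open>Patterns sharing a common subpattern\<close>

lemma strip_pattern_set_slopes:
  assumes "strip_pattern_set n C Q L"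
  obtains e b where "\<forall>T\<in>L. e T < n \<and> in_strip T (line (real (e T) / real (n - 1)) (b T)) C"
proof -
  have "\<forall>T\<in>L. \<exists>eb. fst eb < n \<and> in_strip T (line (real (fst eb) / real (n - 1)) (snd eb)) C"
    using assms unfolding strip_pattern_set_def integer_slope_def by fastforce
  then obtain eb where "\<forall>T\<in>L. fst (eb T) < n \<and> in_strip T (line (real (fst (eb T)) / real (n - 1)) (snd (eb T))) C"
    by metis
  thus thesis by (intro that[of "fst \<circ> eb" "snd \<circ> eb"]) simp
qed

definition superpattern_bounded :: "nat \<Rightarrow> pixel set set \<Rightarrow> real \<Rightarrow> bool" where
  "superpattern_bounded n L K \<longleftrightarrow>
     (\<forall>S\<subseteq>img n. real (card {T\<in>L. S \<subseteq> T}) * real (card S) \<le> K * real n)"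

lemma card_superpatterns_le_density_mult_slopes:
  assumes sps: "strip_pattern_set n C Q L" and "S \<noteq> {}"
    and eb: "\<forall>T\<in>L. e T < n \<and> in_strip T (line (real (e T) / real (n - 1)) (b T)) C"
  shows "card {T\<in>L. S \<subseteq> T} \<le> card (e ` {T\<in>L. S \<subseteq> T}) * Q"
proof -
  define R where "R = {T\<in>L. S \<subseteq> T}"
  have group: "card {T\<in>R. e T = a} \<le> Q" if "a \<in> e ` R" for a
  proof -
    have "a < n" using that eb unfolding R_def by auto
    hence "C_parallel n C {T\<in>R. e T = a}"
      unfolding C_parallel_def integer_slope_def using eb
      by (intro exI[of _ "real a / real (n - 1)"]) (auto simp: R_def)
    moreover have "{T\<in>R. e T = a} \<subseteq> L" unfolding R_def by blast
    moreover have "S \<subseteq> \<Inter>{T\<in>R. e T = a}" unfolding R_def by blast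
    hence "\<Inter>{T\<in>R. e T = a} \<noteq> {}" using assms(2) by blast
    ultimately show ?thesis using sps unfolding strip_pattern_set_def by blast
  qed
  have "finite L" using sps pattern_set_finite unfolding strip_pattern_set_def by blast
  hence "finite (e ` R)" unfolding R_def by simp
  moreover have "R = (\<Union>a\<in>e ` R. {T\<in>R. e T = a})" by blast
  ultimately have "card R \<le> (\<Sum>a\<in>e ` R. card {T\<in>R. e T = a})"
    using card_UN_le[of "e ` R" "\<lambda>a. {T\<in>R. e T = a}"] by simp
  also have "\<dots> \<le> card (e ` R) * Q" using sum_bounded_above[OF group] by simp
  finally show ?thesis unfolding R_def .
qed

lemma strip_pattern_set_superpattern_bounded:
  assumes sps: "strip_pattern_set n C Q L" and "0 < C" "2 \<le> n"
  shows "superpattern_bounded n L (2 * real Q * (2 * C + 1)^2)"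
  unfolding superpattern_bounded_def
proof (intro allI impI)
  fix S assume S: "S \<subseteq> img n"
  define R where "R = {T\<in>L. S \<subseteq> T}"
  obtain e b where eb: "\<forall>T\<in>L. e T < n \<and> in_strip T (line (real (e T) / real (n - 1)) (b T)) C"
    using strip_pattern_set_slopes[OF sps] by blast
  have bound_nonneg: "0 \<le> 2 * real Q * (2 * C + 1)^2 * real n" by simp
  show "real (card R) * real (card S) \<le> 2 * real Q * (2 * C + 1)^2 * real n"
  proof (cases "S = {} \<or> R = {}")
    case False
    have "card R \<le> card (e ` R) * Q"
      unfolding R_def using card_superpatterns_le_density_mult_slopes[OF sps _ eb] False by blast
    hence card_R: "real (card R) \<le> real (card (e ` R)) * real Q" by (simp flip: of_nat_mult)
    have "real (card (e ` R)) * real (card S) \<le> 2 * (2 * C + 1)^2 * real n"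
    proof (rule card_slopes_mult_card_le)
      show "finite S" using S finite_subset finite_img by blast
      show "fst ` S \<subseteq> {..<n}" using S unfolding img_def by auto
      show "e ` R \<subseteq> {..<n}" using eb unfolding R_def by auto
      show "\<forall>a\<in>e ` R. \<exists>b. S \<subseteq> band (real a / real (n - 1)) b C"
        using eb slope_le_1 strip_subset_band unfolding R_def by fastforce
    qed (use False assms(2,3) in auto)
    hence "real Q * (real (card (e ` R)) * real (card S)) \<le> real Q * (2 * (2 * C + 1)^2 * real n)"
      by (rule mult_left_mono) simp
    moreover have "real (card R) * real (card S) \<le> real (card (e ` R)) * real Q * real (card S)"
      using card_R by (rule mult_right_mono) simp
    ultimately show ?thesis by (simp add: algebra_simps)
  qed (use bound_nonneg in auto)
qed

section \<open>Reachability in circuits\<close>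

definition wires :: "nat set \<Rightarrow> (nat \<Rightarrow> node set) \<Rightarrow> (node \<times> node) set" where
  "wires G inn = {(u, Inr g) | u g. g \<in> G \<and> u \<in> inn g}"

definition pixels_below :: "nat set \<Rightarrow> (nat \<Rightarrow> node set) \<Rightarrow> node \<Rightarrow> pixel set" where
  "pixels_below G inn u = {p. (Inl p, u) \<in> (wires G inn)\<^sup>*}"

definition ranked :: "nat set \<Rightarrow> (nat \<Rightarrow> node set) \<Rightarrow> (nat \<Rightarrow> nat) \<Rightarrow> bool" where
  "ranked G inn r \<longleftrightarrow> (\<forall>g\<in>G. \<forall>h. Inr h \<in> inn g \<longrightarrow> r h < r g)"

definition node_rank :: "(nat \<Rightarrow> nat) \<Rightarrow> node \<Rightarrow> nat" where
  "node_rank r u = (case u of Inl _ \<Rightarrow> 0 | Inr g \<Rightarrow> Suc (r g))"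

definition computes_by_reachability ::
  "nat \<Rightarrow> pixel set set \<Rightarrow> nat set \<Rightarrow> (nat \<Rightarrow> node set) \<Rightarrow> (pixel set \<Rightarrow> node) \<Rightarrow> bool" where
  "computes_by_reachability n L G inn out \<longleftrightarrow>
     (\<forall>T\<in>L. \<forall>p\<in>img n. p \<in> pixels_below G inn (out T) \<longleftrightarrow> p \<in> T)"

lemma circuitD:
  assumes "circuit n L G inn out"
  shows "finite G" "\<And>g. g \<in> G \<Longrightarrow> inn g \<subseteq> Inl ` img n \<union> Inr ` G"
    "\<exists>r. ranked G inn r" "out ` L \<subseteq> Inl ` img n \<union> Inr ` G"
  using assms unfolding circuit_def ranked_def by blast+

lemma finite_inn:
  assumes "circuit n L G inn out" "g \<in> G"
  shows "finite (inn g)"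
  using circuitD(1)[OF assms(1)] finite_img by (intro finite_subset[OF circuitD(2)[OF assms]]) simp

lemma wires_iff: "(u, w) \<in> wires G inn \<longleftrightarrow> (\<exists>g. w = Inr g \<and> g \<in> G \<and> u \<in> inn g)"
  unfolding wires_def by auto

lemma finite_wires:
  assumes "circuit n L G inn out"
  shows "finite (wires G inn)"
proof -
  have "wires G inn \<subseteq> (Inl ` img n \<union> Inr ` G) \<times> Inr ` G"
    using circuitD(2)[OF assms] unfolding wires_def by blast
  thus ?thesis by (rule finite_subset) (simp add: circuitD(1)[OF assms] finite_img)
qed

lemma circuit_size_eq_card_wires:
  assumes "circuit n L G inn out"
  shows "circuit_size G inn = card (wires G inn)"
proof -
  have "wires G inn = (\<lambda>(g, u). (u, Inr g)) ` Sigma G inn" unfolding wires_def by force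
  moreover have "inj_on (\<lambda>(g, u). (u, Inr g)) (Sigma G inn)" by (auto simp: inj_on_def)
  ultimately have "card (wires G inn) = card (Sigma G inn)" by (metis card_image)
  also have "\<dots> = circuit_size G inn"
    unfolding circuit_size_def using circuitD(1) finite_inn assms by (simp add: card_SigmaI)
  finally show ?thesis by simp
qed

lemma rtrancl_wires_to_Inl: "(u, Inl p) \<in> (wires G inn)\<^sup>* \<longleftrightarrow> u = Inl p"
  by (auto elim: rtranclE simp: wires_iff)

lemma rtrancl_wires_to_gate:
  assumes "g \<in> G"
  shows "(u, Inr g) \<in> (wires G inn)\<^sup>* \<longleftrightarrow> u = Inr g \<or> (\<exists>w\<in>inn g. (u, w) \<in> (wires G inn)\<^sup>*)"
  using assms by (auto elim: rtranclE intro: rtrancl_into_rtrancl simp: wires_iff)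

lemma pixels_below_Inl: "pixels_below G inn (Inl q) = {q}"
  unfolding pixels_below_def by (simp add: rtrancl_wires_to_Inl)

lemma pixels_below_gate:
  "g \<in> G \<Longrightarrow> pixels_below G inn (Inr g) = (\<Union>w\<in>inn g. pixels_below G inn w)"
  unfolding pixels_below_def by (auto simp: rtrancl_wires_to_gate)

lemma pixels_below_mono:
  "(u, w) \<in> (wires G inn)\<^sup>* \<Longrightarrow> pixels_below G inn u \<subseteq> pixels_below G inn w"
  unfolding pixels_below_def by auto

lemma pixels_below_cases:
  assumes "circuit n L G inn out" "p \<in> pixels_below G inn u"
  shows "u = Inl p \<or> p \<in> img n"
proof -
  have "(Inl p, u) \<in> (wires G inn)\<^sup>*" using assms(2) unfolding pixels_below_def by simp
  thus ?thesis using circuitD(2)[OF assms(1)] by (cases rule: converse_rtranclE) (auto simp: wires_iff)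
qed

lemma finite_pixels_below:
  assumes "circuit n L G inn out"
  shows "finite (pixels_below G inn u)"
proof -
  have "pixels_below G inn u \<subseteq> insert (projl u) (img n)" using pixels_below_cases[OF assms] by force
  thus ?thesis by (rule finite_subset) (simp add: finite_img)
qed

lemma pixels_below_gate_subset_img:
  "circuit n L G inn out \<Longrightarrow> pixels_below G inn (Inr g) \<subseteq> img n"
  using pixels_below_cases by blast

lemma node_rank_wire:
  "ranked G inn r \<Longrightarrow> (u, w) \<in> wires G inn \<Longrightarrow> node_rank r u < node_rank r w"
  unfolding ranked_def by (auto simp: wires_iff node_rank_def split: sum.splits)

lemma node_rank_rtrancl:
  assumes "ranked G inn r" "(u, w) \<in> (wires G inn)\<^sup>*"
  shows "node_rank r u \<le> node_rank r w"
  using assms(2) by induction (auto dest: node_rank_wire[OF assms(1)])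

lemma wire_not_reversible:
  "ranked G inn r \<Longrightarrow> (u, w) \<in> wires G inn \<Longrightarrow> (w, u) \<notin> (wires G inn)\<^sup>*"
  using node_rank_wire node_rank_rtrancl by fastforce

lemma computes_by_reachability_if_computes_or:
  assumes "computes_or n L G inn out"
  shows "computes_by_reachability n L G inn out"
  unfolding computes_by_reachability_def
proof (intro ballI)
  fix T p
  assume T: "T \<in> L"
  define v where "v u \<longleftrightarrow> p \<in> pixels_below G inn u" for u
  have "\<forall>g\<in>G. v (Inr g) = (\<exists>u\<in>inn g. v u)" unfolding v_def by (simp add: pixels_below_gate)
  moreover have "\<forall>q\<in>img n. v (Inl q) = (q = p)" unfolding v_def by (auto simp: pixels_below_Inl)
  ultimately have "\<forall>T\<in>L. v (out T) = (\<exists>q\<in>T. q = p)"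
    using assms[unfolded computes_or_def, THEN spec[of _ "\<lambda>q. q = p"], THEN spec[of _ v]] by blast
  hence "v (out T) = (\<exists>q\<in>T. q = p)" using T by blast
  thus "p \<in> pixels_below G inn (out T) \<longleftrightarrow> p \<in> T" by (simp add: v_def)
qed

(* Iterating the gate equations from zero; on an acyclic circuit the iterates are stable after
   rank-many rounds, which yields a valuation. *)
primrec sum_iterate :: "(pixel \<Rightarrow> nat) \<Rightarrow> (nat \<Rightarrow> node set) \<Rightarrow> nat \<Rightarrow> node \<Rightarrow> nat" where
  "sum_iterate x inn 0 u = (case u of Inl p \<Rightarrow> x p | Inr g \<Rightarrow> 0)"
| "sum_iterate x inn (Suc k) u = (case u of Inl p \<Rightarrow> x p | Inr g \<Rightarrow> (\<Sum>w\<in>inn g. sum_iterate x inn k w))"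

lemma sum_iterate_stable:
  assumes "circuit n L G inn out" "ranked G inn r"
  shows "u \<in> range Inl \<union> Inr ` G \<Longrightarrow> node_rank r u \<le> k \<Longrightarrow> sum_iterate x inn (Suc k) u = sum_iterate x inn k u"
proof (induction k arbitrary: u)
  case (Suc k)
  show ?case
  proof (cases u)
    case (Inr g)
    with Suc.prems have g: "g \<in> G" by auto
    have "sum_iterate x inn (Suc k) w = sum_iterate x inn k w" if "w \<in> inn g" for w
    proof (rule Suc.IH)
      show "w \<in> range Inl \<union> Inr ` G" using circuitD(2)[OF assms(1) g] that by blast
      have "node_rank r w < node_rank r u"
        using node_rank_wire[OF assms(2)] g that Inr by (simp add: wires_iff)
      thus "node_rank r w \<le> k" using Suc.prems by simp
    qed
    thus ?thesis using Inr by simp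
  qed simp
qed (auto simp: node_rank_def)

lemma sum_valuation_exists:
  fixes x :: "pixel \<Rightarrow> nat"
  assumes "circuit n L G inn out"
  shows "\<exists>v. (\<forall>p. v (Inl p) = x p) \<and> (\<forall>g\<in>G. v (Inr g) = (\<Sum>u\<in>inn g. v u))"
proof -
  obtain r where r: "ranked G inn r" using circuitD(3)[OF assms] by blast
  define K where "K = (\<Sum>g\<in>G. Suc (r g))"
  have "sum_iterate x inn K (Inr g) = (\<Sum>u\<in>inn g. sum_iterate x inn K u)" if "g \<in> G" for g
  proof -
    have "Suc (r g) \<le> K" unfolding K_def using that circuitD(1)[OF assms] by (intro member_le_sum) auto
    hence "node_rank r (Inr g) \<le> K" by (simp add: node_rank_def)
    hence "sum_iterate x inn (Suc K) (Inr g) = sum_iterate x inn K (Inr g)"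
      using sum_iterate_stable[OF assms r] that by blast
    thus ?thesis by simp
  qed
  moreover have "sum_iterate x inn K (Inl p) = x p" for p by (cases K) simp_all
  ultimately show ?thesis by blast
qed

lemma sum_valuation_pos_iff:
  fixes x :: "pixel \<Rightarrow> nat"
  assumes circ: "circuit n L G inn out"
    and v: "\<forall>p. v (Inl p) = x p" "\<forall>g\<in>G. v (Inr g) = (\<Sum>w\<in>inn g. v w)"
    and u: "u \<in> range Inl \<union> Inr ` G"
  shows "0 < v u \<longleftrightarrow> (\<exists>q\<in>pixels_below G inn u. 0 < x q)"
proof -
  obtain r where r: "ranked G inn r" using circuitD(3)[OF circ] by blast
  from u show ?thesis
  proof (induction u rule: measure_induct_rule[of "node_rank r"])
    case (less u)
    show ?case
    proof (cases u)
      case (Inl q)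
      moreover have "v (Inl q) = x q" using v(1) by blast
      ultimately show ?thesis by (simp add: pixels_below_Inl)
    next
      case (Inr g)
      with less.prems have g: "g \<in> G" by blast
      have IH: "0 < v w \<longleftrightarrow> (\<exists>q\<in>pixels_below G inn w. 0 < x q)" if w: "w \<in> inn g" for w
      proof (rule less.IH)
        have "(w, u) \<in> wires G inn" using g w Inr by (simp add: wires_iff)
        thus "node_rank r w < node_rank r u" by (rule node_rank_wire[OF r])
        show "w \<in> range Inl \<union> Inr ` G" using circuitD(2)[OF circ g] w by blast
      qed
      have "v u = (\<Sum>w\<in>inn g. v w)" using v(2) g Inr by blast
      hence "v u = 0 \<longleftrightarrow> (\<forall>w\<in>inn g. v w = 0)" using finite_inn[OF circ g] by simp
      hence "0 < v u \<longleftrightarrow> (\<exists>w\<in>inn g. 0 < v w)" by auto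
      also have "\<dots> \<longleftrightarrow> (\<exists>w\<in>inn g. \<exists>q\<in>pixels_below G inn w. 0 < x q)"
        using IH by (rule bex_cong[OF refl])
      also have "\<dots> \<longleftrightarrow> (\<exists>q\<in>pixels_below G inn u. 0 < x q)"
        unfolding Inr pixels_below_gate[OF g] by blast
      finally show ?thesis .
    qed
  qed
qed

lemma computes_by_reachability_if_computes_sum:
  assumes circ: "circuit n L G inn out" and "computes_sum n L G inn out" "pattern_set n L"
  shows "computes_by_reachability n L G inn out"
  unfolding computes_by_reachability_def
proof (intro ballI)
  fix T p
  assume T: "T \<in> L"
  define x :: "pixel \<Rightarrow> nat" where "x q = (if q = p then 1 else 0)" for q
  obtain v where v: "\<forall>q. v (Inl q) = x q" "\<forall>g\<in>G. v (Inr g) = (\<Sum>u\<in>inn g. v u)"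
    using sum_valuation_exists[OF circ] by blast
  have "\<forall>T\<in>L. v (out T) = (\<Sum>q\<in>T. x q)"
    using assms(2)[unfolded computes_sum_def, THEN spec[of _ x], THEN spec[of _ v]] v by blast
  hence "v (out T) = (\<Sum>q\<in>T. x q)" using T by blast
  also have "\<dots> = (if p \<in> T then 1 else 0)" unfolding x_def using pattern_setD(3)[OF assms(3) T] by simp
  finally have "0 < v (out T) \<longleftrightarrow> p \<in> T" by simp
  moreover have "out T \<in> range Inl \<union> Inr ` G" using circuitD(4)[OF circ] T by blast
  hence "0 < v (out T) \<longleftrightarrow> (\<exists>q\<in>pixels_below G inn (out T). 0 < x q)"
    by (rule sum_valuation_pos_iff[OF circ v])
  hence "0 < v (out T) \<longleftrightarrow> p \<in> pixels_below G inn (out T)" by (auto simp: x_def)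
  ultimately show "p \<in> pixels_below G inn (out T) \<longleftrightarrow> p \<in> T" by simp
qed

section \<open>The entropy bound\<close>

lemma ln_le_div_plus_ln:
  fixes a b :: real
  assumes "0 < a" "0 < b"
  shows "ln a \<le> a / b + ln b"
  using ln_le_minus_one[of "a / b"] assms by (simp add: ln_div)

definition wire_ratio :: "nat set \<Rightarrow> (nat \<Rightarrow> node set) \<Rightarrow> node \<times> node \<Rightarrow> real" where
  "wire_ratio G inn e =
     real (card (pixels_below G inn (snd e))) / real (card (pixels_below G inn (fst e)))"

lemma path_wire_ratios_ge_ln:
  assumes circ: "circuit n L G inn out" and "(Inl p, w) \<in> (wires G inn)\<^sup>*"
  shows "\<exists>P\<subseteq>wires G inn. (\<forall>e\<in>P. p \<in> pixels_below G inn (fst e) \<and> (snd e, w) \<in> (wires G inn)\<^sup>*)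
           \<and> ln (real (card (pixels_below G inn w))) \<le> (\<Sum>e\<in>P. wire_ratio G inn e)"
  using assms(2)
proof (induction rule: rtrancl_induct)
  case base
  show ?case by (intro exI[of _ "{}"]) (simp add: pixels_below_Inl)
next
  case (step u w)
  let ?B = "pixels_below G inn"
  obtain P where P: "P \<subseteq> wires G inn" "\<forall>e\<in>P. p \<in> ?B (fst e) \<and> (snd e, u) \<in> (wires G inn)\<^sup>*"
    "ln (real (card (?B u))) \<le> (\<Sum>e\<in>P. wire_ratio G inn e)"
    using step.IH by blast
  obtain r where "ranked G inn r" using circuitD(3)[OF circ] by blast
  hence new: "(u, w) \<notin> P" using P(2) step.hyps(2) wire_not_reversible by fastforce
  have p_below: "p \<in> ?B u" using step.hyps(1) unfolding pixels_below_def by simp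
  moreover have "?B u \<subseteq> ?B w" using step.hyps(2) by (intro pixels_below_mono) simp
  ultimately have "0 < card (?B u)" "0 < card (?B w)"
    using finite_pixels_below[OF circ] by (auto simp: card_gt_0_iff)
  hence "ln (real (card (?B w))) \<le> wire_ratio G inn (u, w) + ln (real (card (?B u)))"
    unfolding wire_ratio_def by (simp add: ln_le_div_plus_ln)
  also have "\<dots> \<le> (\<Sum>e\<in>insert (u, w) P. wire_ratio G inn e)"
    using P(3) new finite_subset[OF P(1) finite_wires[OF circ]] by simp
  finally show ?case
    using P step.hyps(2) p_below by (intro exI[of _ "insert (u, w) P"]) (auto intro: rtrancl_into_rtrancl)
qed

lemma sum_sum_le_sum_card_mult:
  fixes w :: "'e \<Rightarrow> real"
  assumes "finite X" "finite E" "\<forall>x\<in>X. P x \<subseteq> E" "\<forall>x\<in>X. \<forall>e\<in>P x. x \<in> A e"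
    "\<forall>e\<in>E. finite (A e)" "\<forall>e\<in>E. 0 \<le> w e"
  shows "(\<Sum>x\<in>X. \<Sum>e\<in>P x. w e) \<le> (\<Sum>e\<in>E. real (card (A e)) * w e)"
proof -
  have "(\<Sum>e\<in>P x. w e) = (\<Sum>e\<in>E. if e \<in> P x then w e else 0)" if "x \<in> X" for x
    using sum.inter_restrict[OF assms(2), of w "P x"] assms(3) that by (simp add: Int_absorb1)
  hence "(\<Sum>x\<in>X. \<Sum>e\<in>P x. w e) = (\<Sum>x\<in>X. \<Sum>e\<in>E. if e \<in> P x then w e else 0)"
    by (rule sum.cong[OF refl])
  also have "\<dots> = (\<Sum>e\<in>E. \<Sum>x\<in>X. if e \<in> P x then w e else 0)" by (rule sum.swap)
  also have "\<dots> = (\<Sum>e\<in>E. real (card {x\<in>X. e \<in> P x}) * w e)"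
    using assms(1) by (simp add: sum.If_cases Int_def)
  also have "\<dots> \<le> (\<Sum>e\<in>E. real (card (A e)) * w e)"
    using assms(4-6) by (intro sum_mono mult_right_mono) (auto intro: card_mono)
  finally show ?thesis .
qed

lemma of_nat_mult_divide_le: "real a * (real b / real a) \<le> real b"
  by (cases "a = 0") simp_all

definition pattern_entropy :: "pixel set set \<Rightarrow> real" where
  "pattern_entropy L = (\<Sum>T\<in>L. real (card T) * ln (real (card T)))"

lemma card_mult_ln_card_le_sum_wires_above:
  assumes circ: "circuit n L G inn out" and reach: "computes_by_reachability n L G inn out"
    and L: "pattern_set n L" and T: "T \<in> L"
  shows "real (card T) * ln (real (card T))
    \<le> (\<Sum>e\<in>{e\<in>wires G inn. (snd e, out T) \<in> (wires G inn)\<^sup>*}. real (card (pixels_below G inn (snd e))))"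
proof -
  let ?B = "pixels_below G inn"
  define ET where "ET = {e\<in>wires G inn. (snd e, out T) \<in> (wires G inn)\<^sup>*}"
  have finite_ET: "finite ET" unfolding ET_def using finite_wires[OF circ] by simp
  have T_below: "T \<subseteq> ?B (out T)" using reach T pattern_setD(1)[OF L T]
    unfolding computes_by_reachability_def by blast
  have "\<forall>p\<in>T. \<exists>P. P \<subseteq> ET \<and> (\<forall>e\<in>P. p \<in> ?B (fst e))
                  \<and> ln (real (card (?B (out T)))) \<le> (\<Sum>e\<in>P. wire_ratio G inn e)"
  proof
    fix p assume "p \<in> T"
    hence "(Inl p, out T) \<in> (wires G inn)\<^sup>*" using T_below unfolding pixels_below_def by blast
    from path_wire_ratios_ge_ln[OF circ this] show "\<exists>P. P \<subseteq> ET \<and> (\<forall>e\<in>P. p \<in> ?B (fst e))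
        \<and> ln (real (card (?B (out T)))) \<le> (\<Sum>e\<in>P. wire_ratio G inn e)"
      unfolding ET_def by blast
  qed
  then obtain P where P: "\<forall>p\<in>T. P p \<subseteq> ET \<and> (\<forall>e\<in>P p. p \<in> ?B (fst e))
                  \<and> ln (real (card (?B (out T)))) \<le> (\<Sum>e\<in>P p. wire_ratio G inn e)"
    by metis
  have "0 < card T" using pattern_setD[OF L T] by (simp add: card_gt_0_iff)
  moreover have "card T \<le> card (?B (out T))" using T_below finite_pixels_below[OF circ] by (rule card_mono[rotated])
  ultimately have ln_card_T: "ln (real (card T)) \<le> ln (real (card (?B (out T))))" by simp
  have "real (card T) * ln (real (card T)) = (\<Sum>p\<in>T. ln (real (card T)))" by simp
  also have "\<dots> \<le> (\<Sum>p\<in>T. \<Sum>e\<in>P p. wire_ratio G inn e)"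
    using ln_card_T P by (intro sum_mono) (blast intro: order_trans)
  also have "\<dots> \<le> (\<Sum>e\<in>ET. real (card (?B (fst e))) * wire_ratio G inn e)"
    using P pattern_setD(3)[OF L T] finite_ET finite_pixels_below[OF circ]
    by (intro sum_sum_le_sum_card_mult) (auto simp: wire_ratio_def)
  also have "\<dots> \<le> (\<Sum>e\<in>ET. real (card (?B (snd e))))"
    unfolding wire_ratio_def by (intro sum_mono) (simp add: of_nat_mult_divide_le)
  finally show ?thesis unfolding ET_def .
qed

lemma pattern_entropy_le_size:
  assumes circ: "circuit n L G inn out" and reach: "computes_by_reachability n L G inn out"
    and L: "pattern_set n L" and K: "superpattern_bounded n L K"
  shows "pattern_entropy L \<le> K * real n * real (circuit_size G inn)"
proof -
  let ?E = "wires G inn" and ?B = "pixels_below G inn"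
  define ET where "ET T = {e\<in>?E. (snd e, out T) \<in> ?E\<^sup>*}" for T
  define A where "A e = {T\<in>L. ?B (snd e) \<subseteq> T}" for e :: "node \<times> node"
  have B_img: "?B (snd e) \<subseteq> img n" if e: "e \<in> ?E" for e
  proof -
    obtain g where "snd e = Inr g" using e by (cases e) (auto simp: wires_iff)
    thus ?thesis using pixels_below_gate_subset_img[OF circ] by simp
  qed
  have above: "T \<in> A e" if "T \<in> L" "e \<in> ET T" for T e
  proof -
    have "?B (snd e) \<subseteq> ?B (out T)" using that(2) unfolding ET_def by (simp add: pixels_below_mono)
    thus ?thesis using reach that B_img[of e] unfolding computes_by_reachability_def A_def ET_def by blast
  qed
  have "pattern_entropy L \<le> (\<Sum>T\<in>L. \<Sum>e\<in>ET T. real (card (?B (snd e))))"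
    unfolding pattern_entropy_def ET_def
    by (intro sum_mono card_mult_ln_card_le_sum_wires_above[OF circ reach L])
  also have "\<dots> \<le> (\<Sum>e\<in>?E. real (card (A e)) * real (card (?B (snd e))))"
    using pattern_set_finite[OF L] finite_wires[OF circ] above
    by (intro sum_sum_le_sum_card_mult) (auto simp: ET_def A_def pattern_set_finite[OF L])
  also have "\<dots> \<le> (\<Sum>e\<in>?E. K * real n)"
    using K B_img unfolding superpattern_bounded_def A_def by (intro sum_mono) blast
  also have "\<dots> = K * real n * real (circuit_size G inn)"
    by (simp add: circuit_size_eq_card_wires[OF circ])
  finally show ?thesis .
qed

section \<open>Chain circuits\<close>

locale pattern_chains =
  fixes n :: nat and L :: "pixel set set" and ix :: "pixel set \<Rightarrow> nat" and xs :: "pixel set \<Rightarrow> pixel list"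
  assumes pattern_set: "pattern_set n L" and inj_ix: "inj_on ix L"
    and xs: "\<And>T. T \<in> L \<Longrightarrow> set (xs T) = T \<and> distinct (xs T)"
begin

definition chain_gate :: "pixel set \<Rightarrow> nat \<Rightarrow> nat" where
  "chain_gate T j = prod_encode (ix T, j)"

definition chain_gates :: "nat set" where
  "chain_gates = {chain_gate T j | T j. T \<in> L \<and> j < length (xs T)}"

definition chain_inputs :: "nat \<Rightarrow> node set" where
  "chain_inputs g = (case prod_decode g of (i, j) \<Rightarrow>
     let T = inv_into L ix i in
     if j = 0 then {Inl (xs T ! 0)} else {Inr (chain_gate T (j - 1)), Inl (xs T ! j)})"

definition chain_output :: "pixel set \<Rightarrow> node" where
  "chain_output T = Inr (chain_gate T (length (xs T) - 1))"

lemma chain_inputs_gate: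
  "T \<in> L \<Longrightarrow> chain_inputs (chain_gate T j) =
     (if j = 0 then {Inl (xs T ! 0)} else {Inr (chain_gate T (j - 1)), Inl (xs T ! j)})"
  unfolding chain_inputs_def chain_gate_def using inj_ix by simp

lemma chain_gate_eq_iff:
  "T \<in> L \<Longrightarrow> T' \<in> L \<Longrightarrow> chain_gate T j = chain_gate T' j' \<longleftrightarrow> T = T' \<and> j = j'"
  unfolding chain_gate_def using inj_ix by (auto simp: prod_encode_eq inj_on_eq_iff)

lemma length_chain_pos: "T \<in> L \<Longrightarrow> 0 < length (xs T)"
  using xs pattern_setD(2)[OF pattern_set] by fastforce

lemma chain_pixel_in_img: "T \<in> L \<Longrightarrow> j < length (xs T) \<Longrightarrow> xs T ! j \<in> img n"
  using xs pattern_setD(1)[OF pattern_set] nth_mem by blast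

lemma chain_gate_in: "T \<in> L \<Longrightarrow> j < length (xs T) \<Longrightarrow> chain_gate T j \<in> chain_gates"
  unfolding chain_gates_def by blast

lemma chain_circuit: "circuit n L chain_gates chain_inputs chain_output"
  unfolding circuit_def
proof (intro conjI)
  have "chain_gates = (\<lambda>(T, j). chain_gate T j) ` (SIGMA T:L. {..<length (xs T)})"
    unfolding chain_gates_def by auto
  thus "finite chain_gates" using pattern_set_finite[OF pattern_set] by simp
  show "\<forall>g\<in>chain_gates. chain_inputs g \<noteq> {} \<and> chain_inputs g \<subseteq> Inl ` img n \<union> Inr ` chain_gates"
  proof
    fix g assume "g \<in> chain_gates"
    then obtain T j where g: "g = chain_gate T j" "T \<in> L" "j < length (xs T)"
      unfolding chain_gates_def by blast
    thus "chain_inputs g \<noteq> {} \<and> chain_inputs g \<subseteq> Inl ` img n \<union> Inr ` chain_gates"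
      using chain_pixel_in_img[OF g(2)] chain_gate_in[OF g(2)] by (auto simp: chain_inputs_gate)
  qed
  have rank_decreases: "snd (prod_decode h) < snd (prod_decode g)"
    if g: "g \<in> chain_gates" and h: "Inr h \<in> chain_inputs g" for g h
  proof -
    obtain T j where "g = chain_gate T j" "T \<in> L" "h = chain_gate T (j - 1)" "0 < j"
      using g h unfolding chain_gates_def by (auto simp: chain_inputs_gate split: if_splits)
    thus ?thesis by (simp add: chain_gate_def)
  qed
  show "\<exists>r :: nat \<Rightarrow> nat. \<forall>g\<in>chain_gates. \<forall>h. Inr h \<in> chain_inputs g \<longrightarrow> r h < r g"
    by (intro exI[of _ "\<lambda>g. snd (prod_decode g)"]) (blast intro: rank_decreases)
  show "inj_on chain_output L" by (auto intro!: inj_onI simp: chain_output_def chain_gate_eq_iff)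
  show "chain_output ` L \<subseteq> Inl ` img n \<union> Inr ` chain_gates"
    unfolding chain_output_def chain_gates_def using length_chain_pos by fastforce
  show "\<forall>T\<in>L. \<forall>g\<in>chain_gates. chain_output T \<notin> chain_inputs g"
    unfolding chain_output_def chain_gates_def
    by (auto simp: chain_inputs_gate chain_gate_eq_iff split: if_splits)
qed

lemma chain_fanin: "card (chain_inputs g) \<le> 2"
  unfolding chain_inputs_def by (auto simp: Let_def card_insert_if split: prod.splits)

lemma chain_value_or:
  assumes v: "\<forall>p\<in>img n. v (Inl p) = x p" "\<forall>g\<in>chain_gates. v (Inr g) = (\<exists>u\<in>chain_inputs g. v u)"
    and T: "T \<in> L"
  shows "j < length (xs T) \<Longrightarrow> v (Inr (chain_gate T j)) = (\<exists>q\<in>set (take (Suc j) (xs T)). x q)"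
proof (induction j)
  case 0
  have "v (Inr (chain_gate T 0)) = x (xs T ! 0)"
    using v chain_gate_in[OF T 0] chain_pixel_in_img[OF T 0] by (simp add: chain_inputs_gate[OF T])
  moreover have "take (Suc 0) (xs T) = [xs T ! 0]" using 0 by (cases "xs T") auto
  ultimately show ?case by simp
next
  case (Suc j)
  have "v (Inr (chain_gate T (Suc j))) = (v (Inr (chain_gate T j)) \<or> x (xs T ! Suc j))"
    using v chain_gate_in[OF T Suc.prems] chain_pixel_in_img[OF T Suc.prems]
    by (simp add: chain_inputs_gate[OF T])
  thus ?case using Suc by (auto simp: take_Suc_conv_app_nth)
qed

lemma chain_value_sum:
  assumes v: "\<forall>p\<in>img n. v (Inl p) = x p" "\<forall>g\<in>chain_gates. v (Inr g) = (\<Sum>u\<in>chain_inputs g. v u)"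
    and T: "T \<in> L"
  shows "j < length (xs T) \<Longrightarrow> v (Inr (chain_gate T j)) = (\<Sum>q\<in>set (take (Suc j) (xs T)). x q)"
proof (induction j)
  case 0
  have "v (Inr (chain_gate T 0)) = x (xs T ! 0)"
    using v chain_gate_in[OF T 0] chain_pixel_in_img[OF T 0] by (simp add: chain_inputs_gate[OF T])
  moreover have "take (Suc 0) (xs T) = [xs T ! 0]" using 0 by (cases "xs T") auto
  ultimately show ?case by simp
next
  case (Suc j)
  have "v (Inr (chain_gate T (Suc j))) = v (Inr (chain_gate T j)) + x (xs T ! Suc j)"
    using v chain_gate_in[OF T Suc.prems] chain_pixel_in_img[OF T Suc.prems]
    by (simp add: chain_inputs_gate[OF T])
  also have "\<dots> = (\<Sum>q\<in>set (take (Suc j) (xs T)). x q) + x (xs T ! Suc j)" using Suc by simp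
  also have "\<dots> = (\<Sum>q\<in>insert (xs T ! Suc j) (set (take (Suc j) (xs T))). x q)"
  proof -
    have "distinct (take (Suc (Suc j)) (xs T))" using xs[OF T] by simp
    hence "xs T ! Suc j \<notin> set (take (Suc j) (xs T))"
      using Suc.prems by (simp add: take_Suc_conv_app_nth[of "Suc j"])
    thus ?thesis by (simp add: add.commute)
  qed
  also have "\<dots> = (\<Sum>q\<in>set (take (Suc (Suc j)) (xs T)). x q)"
    using Suc.prems by (simp add: take_Suc_conv_app_nth[of "Suc j"])
  finally show ?case .
qed

lemma chain_computes_or: "computes_or n L chain_gates chain_inputs chain_output"
  unfolding computes_or_def
proof (intro allI impI ballI)
  fix x :: "pixel \<Rightarrow> bool" and v :: "node \<Rightarrow> bool" and T
  assume "(\<forall>p\<in>img n. v (Inl p) = x p) \<and> (\<forall>g\<in>chain_gates. v (Inr g) = (\<exists>u\<in>chain_inputs g. v u))"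
    and T: "T \<in> L"
  from chain_value_or[OF _ _ T, of v x "length (xs T) - 1"] this(1)
  show "v (chain_output T) = (\<exists>p\<in>T. x p)"
    using length_chain_pos[OF T] xs[OF T] by (simp add: chain_output_def)
qed

lemma chain_computes_sum: "computes_sum n L chain_gates chain_inputs chain_output"
  unfolding computes_sum_def
proof (intro allI impI ballI)
  fix x :: "pixel \<Rightarrow> nat" and v :: "node \<Rightarrow> nat" and T
  assume "(\<forall>p\<in>img n. v (Inl p) = x p) \<and> (\<forall>g\<in>chain_gates. v (Inr g) = (\<Sum>u\<in>chain_inputs g. v u))"
    and T: "T \<in> L"
  from chain_value_sum[OF _ _ T, of v x "length (xs T) - 1"] this(1)
  show "v (chain_output T) = (\<Sum>p\<in>T. x p)"
    using length_chain_pos[OF T] xs[OF T] by (simp add: chain_output_def)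
qed

end

lemma fanin_2_circuit_exists:
  assumes "pattern_set n L"
  shows "\<exists>G inn out. circuit n L G inn out \<and> (\<forall>g\<in>G. card (inn g) \<le> 2)
           \<and> computes_or n L G inn out \<and> computes_sum n L G inn out"
proof -
  obtain ix :: "pixel set \<Rightarrow> nat" where "inj_on ix L"
    using finite_imp_inj_to_nat_seg[OF pattern_set_finite[OF assms]] by blast
  moreover obtain xs where "\<And>T. T \<in> L \<Longrightarrow> set (xs T) = T \<and> distinct (xs T)"
    using finite_distinct_list pattern_setD(3)[OF assms] by metis
  ultimately interpret pattern_chains n L ix xs using assms by unfold_locales
  show ?thesis using chain_circuit chain_fanin chain_computes_or chain_computes_sum by blast
qed

lemma circuit_size_le_twice_gates:
  assumes "\<forall>g\<in>G. card (inn g) \<le> 2"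
  shows "circuit_size G inn \<le> 2 * card G"
proof -
  have "circuit_size G inn \<le> (\<Sum>g\<in>G. 2)" unfolding circuit_size_def using assms by (intro sum_mono) blast
  thus ?thesis by simp
qed

lemma pattern_entropy_le_OR_cost:
  assumes L: "pattern_set n L" and K: "superpattern_bounded n L K"
  shows "pattern_entropy L \<le> K * real n * real (OR_cost n L)"
proof -
  let ?P = "\<lambda>s. \<exists>G inn out. circuit n L G inn out \<and> computes_or n L G inn out \<and> circuit_size G inn = s"
  have "\<exists>s. ?P s" using fanin_2_circuit_exists[OF L] by blast
  from LeastI_ex[OF this] obtain G inn out where
    "circuit n L G inn out" "computes_or n L G inn out" "circuit_size G inn = OR_cost n L"
    unfolding OR_cost_def by blast
  thus ?thesis
    using pattern_entropy_le_size[OF _ computes_by_reachability_if_computes_or L K] by metis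
qed

lemma pattern_entropy_le_SUM_cost:
  assumes L: "pattern_set n L" and K: "superpattern_bounded n L K"
  shows "pattern_entropy L \<le> K * real n * real (SUM_cost n L)"
proof -
  let ?P = "\<lambda>s. \<exists>G inn out. circuit n L G inn out \<and> computes_sum n L G inn out \<and> circuit_size G inn = s"
  have "\<exists>s. ?P s" using fanin_2_circuit_exists[OF L] by blast
  from LeastI_ex[OF this] obtain G inn out where
    "circuit n L G inn out" "computes_sum n L G inn out" "circuit_size G inn = SUM_cost n L"
    unfolding SUM_cost_def by blast
  thus ?thesis
    using pattern_entropy_le_size[OF _ computes_by_reachability_if_computes_sum L K] L by metis
qed

lemma pattern_entropy_le_OR2_cost:
  assumes L: "pattern_set n L" and K: "superpattern_bounded n L K" "0 \<le> K"
  shows "pattern_entropy L \<le> 2 * K * real n * real (OR2_cost n L)"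
proof -
  let ?P = "\<lambda>s. \<exists>G inn out. circuit n L G inn out \<and> (\<forall>g\<in>G. card (inn g) \<le> 2)
                             \<and> computes_or n L G inn out \<and> card G = s"
  have "\<exists>s. ?P s" using fanin_2_circuit_exists[OF L] by blast
  from LeastI_ex[OF this] obtain G inn out where G: "circuit n L G inn out" "\<forall>g\<in>G. card (inn g) \<le> 2"
      "computes_or n L G inn out" "card G = OR2_cost n L"
    unfolding OR2_cost_def by blast
  have "pattern_entropy L \<le> K * real n * real (circuit_size G inn)"
    using pattern_entropy_le_size[OF G(1) computes_by_reachability_if_computes_or[OF G(3)] L K(1)] .
  also have "\<dots> \<le> K * real n * (2 * real (OR2_cost n L))"
    using circuit_size_le_twice_gates[OF G(2)] G(4) K(2) by (intro mult_left_mono) auto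
  finally show ?thesis by (simp add: algebra_simps)
qed

lemma pattern_entropy_le_SUM2_cost:
  assumes L: "pattern_set n L" and K: "superpattern_bounded n L K" "0 \<le> K"
  shows "pattern_entropy L \<le> 2 * K * real n * real (SUM2_cost n L)"
proof -
  let ?P = "\<lambda>s. \<exists>G inn out. circuit n L G inn out \<and> (\<forall>g\<in>G. card (inn g) \<le> 2)
                             \<and> computes_sum n L G inn out \<and> card G = s"
  have "\<exists>s. ?P s" using fanin_2_circuit_exists[OF L] by blast
  from LeastI_ex[OF this] obtain G inn out where G: "circuit n L G inn out" "\<forall>g\<in>G. card (inn g) \<le> 2"
      "computes_sum n L G inn out" "card G = SUM2_cost n L"
    unfolding SUM2_cost_def by blast
  have "pattern_entropy L \<le> K * real n * real (circuit_size G inn)"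
    using pattern_entropy_le_size[OF G(1) computes_by_reachability_if_computes_sum[OF G(1,3) L] L K(1)] .
  also have "\<dots> \<le> K * real n * (2 * real (SUM2_cost n L))"
    using circuit_size_le_twice_gates[OF G(2)] G(4) K(2) by (intro mult_left_mono) auto
  finally show ?thesis by (simp add: algebra_simps)
qed

lemma mult_ln_le_mult_ln_self_plus:
  assumes "1 \<le> t" "1 \<le> n"
  shows "real t * ln (real n) \<le> real t * ln (real t) + real n"
proof -
  have "ln (real n / real t) \<le> real n / real t - 1" using assms by (intro ln_le_minus_one) simp
  hence "real t * (ln (real n) - ln (real t)) \<le> real t * (real n / real t - 1)"
    using assms by (intro mult_left_mono) (simp_all add: ln_div)
  thus ?thesis using assms by (simp add: algebra_simps)
qed

lemma pattern_entropy_ge_volume: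
  assumes L: "pattern_set n L" and "1 \<le> n"
  shows "real (volume L) * ln (real n) - real (card L) * real n \<le> pattern_entropy L"
proof -
  have "1 \<le> card T" if "T \<in> L" for T
    using pattern_setD[OF L that] by (simp add: Suc_le_eq card_gt_0_iff)
  hence "(\<Sum>T\<in>L. real (card T) * ln (real n) - real n) \<le> pattern_entropy L"
    unfolding pattern_entropy_def using assms(2)
    by (intro sum_mono) (smt (verit) mult_ln_le_mult_ln_self_plus)
  thus ?thesis unfolding volume_def by (simp add: sum_subtractf sum_distrib_right)
qed

lemma bigomega_n2_ln_n_if_entropy_bounds:
  fixes H :: "nat \<Rightarrow> real" and c V m :: "nat \<Rightarrow> nat"
  assumes "0 \<le> K" and upper: "\<forall>n\<ge>2. H n \<le> K * real n * real (c n)"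
    and lower: "\<forall>n\<ge>2. real (V n) * ln (real n) - real (m n) * real n \<le> H n"
    and "(\<lambda>n. real (m n)) \<in> O(\<lambda>n. real n ^ 2)" and "(\<lambda>n. real (V n)) \<in> \<Omega>(\<lambda>n. real n ^ 3)"
  shows "(\<lambda>n. real (c n)) \<in> \<Omega>(\<lambda>n. real n ^ 2 * ln (real n))"
proof -
  obtain c1 where c1: "0 < c1" "eventually (\<lambda>n. real (m n) \<le> c1 * real n ^ 2) at_top"
    using assms(4) by (elim landau_o.bigE) auto
  obtain c2 where c2: "0 < c2" "eventually (\<lambda>n. c2 * real n ^ 3 \<le> real (V n)) at_top"
    using assms(5) by (elim landau_omega.bigE) auto
  have "filterlim (\<lambda>n. ln (real n)) at_top at_top"
    by (rule filterlim_compose[OF ln_at_top filterlim_real_sequentially])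
  hence "eventually (\<lambda>n. 2 * c1 / c2 \<le> ln (real n)) at_top" by (simp add: filterlim_at_top)
  with c1(2) c2(2) eventually_ge_at_top[of 2]
  have "eventually (\<lambda>n. norm (real (c n)) \<ge> c2 / (2 * (K + 1)) * norm (real n ^ 2 * ln (real n))) at_top"
  proof eventually_elim
    case (elim n)
    have n: "0 < real n" "0 \<le> ln (real n)" using elim(3) by auto
    have "c1 * real n ^ 3 \<le> c2 / 2 * ln (real n) * real n ^ 3"
      using elim(4) c2(1) by (intro mult_right_mono) (auto simp: field_simps)
    moreover have "real (m n) * real n \<le> c1 * real n ^ 3"
      using elim(1) n(1) mult_right_mono[of "real (m n)" "c1 * real n ^ 2" "real n"]
      by (simp add: power3_eq_cube power2_eq_square mult.assoc)
    moreover have "c2 * real n ^ 3 * ln (real n) \<le> real (V n) * ln (real n)"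
      using elim(2) n(2) by (rule mult_right_mono)
    moreover have "real n * (c2 / 2 * real n ^ 2 * ln (real n))
        = c2 * real n ^ 3 * ln (real n) - c2 / 2 * ln (real n) * real n ^ 3"
      by (simp add: power3_eq_cube power2_eq_square algebra_simps)
    moreover have "real (V n) * ln (real n) - real (m n) * real n \<le> H n" using lower elim(3) by blast
    ultimately have "real n * (c2 / 2 * real n ^ 2 * ln (real n)) \<le> H n" by linarith
    also have "\<dots> \<le> K * real n * real (c n)" using upper elim(3) by blast
    also have "\<dots> \<le> real n * ((K + 1) * real (c n))" by (simp add: algebra_simps)
    finally have "c2 / 2 * real n ^ 2 * ln (real n) \<le> (K + 1) * real (c n)" using n(1) by simp
    thus ?case using n(2) assms(1) by (simp add: field_simps)
  qed
  moreover have "0 < c2 / (2 * (K + 1))" using c2(1) assms(1) by simp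
  ultimately show ?thesis by (rule landau_omega.bigI[rotated])
qed

theorem theorem4:
  fixes C :: real and Q :: nat and \<L> :: "nat \<Rightarrow> pixel set set"
  assumes "C > 0"
    and "\<forall>n\<ge>1. strip_pattern_set n C Q (\<L> n)"
    and "(\<lambda>n. real (card (\<L> n))) \<in> \<Theta>(\<lambda>n. real n ^ 2)"
    and "(\<lambda>n. real (volume (\<L> n))) \<in> \<Omega>(\<lambda>n. real n ^ 3)"
  shows "(\<lambda>n. real (OR_cost n (\<L> n))) \<in> \<Omega>(\<lambda>n. real n ^ 2 * ln (real n))
       \<and> (\<lambda>n. real (SUM_cost n (\<L> n))) \<in> \<Omega>(\<lambda>n. real n ^ 2 * ln (real n))
       \<and> (\<lambda>n. real (OR2_cost n (\<L> n))) \<in> \<Omega>(\<lambda>n. real n ^ 2 * ln (real n))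
       \<and> (\<lambda>n. real (SUM2_cost n (\<L> n))) \<in> \<Omega>(\<lambda>n. real n ^ 2 * ln (real n))"
proof -
  define K where "K = 2 * real Q * (2 * C + 1)^2"
  have K: "0 \<le> K" unfolding K_def by simp
  have sps: "strip_pattern_set n C Q (\<L> n)" if "2 \<le> n" for n using assms(2) that by simp
  have L: "pattern_set n (\<L> n)" if "2 \<le> n" for n
    using sps[OF that] unfolding strip_pattern_set_def by blast
  have bounded: "superpattern_bounded n (\<L> n) K" if "2 \<le> n" for n
    unfolding K_def by (rule strip_pattern_set_superpattern_bounded[OF sps[OF that] assms(1) that])
  have "\<forall>n\<ge>2. real (volume (\<L> n)) * ln (real n) - real (card (\<L> n)) * real n \<le> pattern_entropy (\<L> n)"
    using pattern_entropy_ge_volume L by simp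
  note bigomega = bigomega_n2_ln_n_if_entropy_bounds[OF _ _ this bigthetaD1[OF assms(3)] assms(4)]
  have K2: "0 \<le> 2 * K" using K by simp
  show ?thesis
    using bigomega[OF K] bigomega[OF K2] L bounded K
      pattern_entropy_le_OR_cost pattern_entropy_le_SUM_cost
      pattern_entropy_le_OR2_cost pattern_entropy_le_SUM2_cost
    by (simp add: mult.assoc)
qed

end
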